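(* Let $H, G_1,\dots,G_r$ be finite simple graphs and $q\in\{1,\dots,r\}$ a positive integer. Suppose that $\widehat{H}\otimes\mathcal{C}_q\le\bigoplus_{d=1}^r\widehat{G_d}\otimes\mathcal{C}_d$. Then $\widehat{H}\otimes\mathcal{C}_q\le\bigoplus_{d=q}^r\widehat{G_d}\otimes\mathcal{C}_d$.
   Context: A noncommutative graph is a subspace $S\subseteq B(\mathcal{H})$ of operators on a finite-dimensional complex Hilbert space $\mathcal{H}$ with $I\in S$ and $S^*=S$. For noncommutative graphs $T\subseteq B(\mathcal{K})$ and $S\subseteq B(\mathcal{H})$, a cohomomorphism from $T$ to $S$ is a finite family of linear maps $E_i:\mathcal{K}\to\mathcal{H}$ ($i\in I$) with $\sum_i E_i^*E_i=I$ and $E_i^*SE_j\subseteq T$ for all $i,j\in I$; we write $T\le S$ if one exists. Tensor product: $S\otimes T=\operatorname{span}\{A\otimes B: A\in S, B\in T\}$; direct sum: $S\oplus T=\{A\oplus B:A\in S,B\in T\}$. For a finite simple graph $G$ (write $x\simeq x'$ if $x=x'$ or $x,x'$ adjacent), $\widehat{G}=\operatorname{span}\{|x\rangle\langle x'|: x,x'\in V(G), x\simeq x'\}\subseteq B(\mathbb{C}^{V(G)})$. For $d\ge1$, $\mathcal{C}_d=\mathbb{C}I\subseteq B(\mathbb{C}^d)$ (confusability graph of the noiseless $d$-dimensional quantum channel). If $V(G_d)$ is empty, the corresponding summand is zero-dimensional. *)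

theory Defs
  imports "Jordan_Normal_Form.Matrix"
begin

text \<open>Operators on C^n are complex n x n matrices (Jordan_Normal_Form).
  A noncommutative graph is represented by its ambient dimension n together with a set of
  n x n matrices.\<close>

definition adj :: "complex mat \<Rightarrow> complex mat" where
  "adj A = mat (dim_col A) (dim_row A) (\<lambda>(i,j). cnj (A $$ (j,i)))"

definition kron :: "complex mat \<Rightarrow> complex mat \<Rightarrow> complex mat" where
  "kron A B = mat (dim_row A * dim_row B) (dim_col A * dim_col B)
     (\<lambda>(i,j). A $$ (i div dim_row B, j div dim_col B) * B $$ (i mod dim_row B, j mod dim_col B))"

definition msum :: "nat \<Rightarrow> complex mat list \<Rightarrow> complex mat" where
  "msum k xs = foldr (+) xs (0\<^sub>m k k)"

definition mspan :: "nat \<Rightarrow> complex mat set \<Rightarrow> complex mat set" where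
  "mspan n X = {M. \<exists>cs As. length cs = length As \<and> set As \<subseteq> X \<and>
      M = msum n (map (\<lambda>(c,A). c \<cdot>\<^sub>m A) (zip cs As))}"

definition cohom :: "nat \<Rightarrow> complex mat set \<Rightarrow> nat \<Rightarrow> complex mat set \<Rightarrow> bool" where
  "cohom k T n S \<longleftrightarrow> (\<exists>Es :: complex mat list.
      (\<forall>E \<in> set Es. E \<in> carrier_mat n k) \<and>
      msum k (map (\<lambda>E. adj E * E) Es) = 1\<^sub>m k \<and>
      (\<forall>Ei \<in> set Es. \<forall>Ej \<in> set Es. \<forall>A \<in> S. adj Ei * A * Ej \<in> T))"

definition nc_tensor :: "nat \<Rightarrow> complex mat set \<Rightarrow> nat \<Rightarrow> complex mat set \<Rightarrow> complex mat set" where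
  "nc_tensor n S m T = mspan (n * m) {kron A B | A B. A \<in> S \<and> B \<in> T}"

fun nc_dsum :: "(nat \<times> complex mat set) list \<Rightarrow> nat \<times> complex mat set" where
  "nc_dsum [] = (0, {0\<^sub>m 0 0})"
| "nc_dsum ((n, S) # rest) =
     (n + fst (nc_dsum rest),
      {four_block_mat A (0\<^sub>m n (fst (nc_dsum rest))) (0\<^sub>m (fst (nc_dsum rest)) n) B
        | A B. A \<in> S \<and> B \<in> snd (nc_dsum rest)})"

definition simple_graph :: "nat \<Rightarrow> (nat \<Rightarrow> nat \<Rightarrow> bool) \<Rightarrow> bool" where
  "simple_graph n E \<longleftrightarrow> (\<forall>x<n. \<forall>y<n. E x y \<longrightarrow> E y x) \<and> (\<forall>x<n. \<not> E x x)"

definition munit :: "nat \<Rightarrow> nat \<Rightarrow> nat \<Rightarrow> complex mat" where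
  "munit n x y = mat n n (\<lambda>(i,j). if i = x \<and> j = y then 1 else 0)"

definition ghat :: "nat \<Rightarrow> (nat \<Rightarrow> nat \<Rightarrow> bool) \<Rightarrow> complex mat set" where
  "ghat n E = mspan n {munit n x y | x y. x < n \<and> y < n \<and> (x = y \<or> E x y)}"

definition Cd :: "nat \<Rightarrow> complex mat set" where
  "Cd d = {c \<cdot>\<^sub>m 1\<^sub>m d | c. True}"

definition summand :: "(nat \<Rightarrow> nat) \<Rightarrow> (nat \<Rightarrow> nat \<Rightarrow> nat \<Rightarrow> bool) \<Rightarrow> nat \<Rightarrow> nat \<times> complex mat set" where
  "summand Gn GE d = (Gn d * d, nc_tensor (Gn d) (ghat (Gn d) (GE d)) d (Cd d))"

end

theory Submission
  imports Defs "Jordan_Normal_Form.Determinant"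
begin

text \<open>Let \<open>E\<^sub>i\<close> be a cohomomorphism from \<open>H \<otimes> C\<^sub>q\<close> into the direct sum. For \<open>d < q\<close> and a
  vertex \<open>v\<close> of \<open>G\<^sub>d\<close>, the diagonal projection \<open>P\<close> onto the block \<open>|v\<rangle>\<langle>v| \<otimes> I\<^sub>d\<close> of the
  \<open>d\<close>-th summand lies in the direct sum, so \<open>E\<^sub>i\<^sup>* P E\<^sub>i \<in> H \<otimes> C\<^sub>q\<close>, whose diagonal
  \<open>q \<times> q\<close> blocks are scalar. Each such block is the Gram matrix of the columns of a \<open>d \<times> q\<close>
  matrix, hence singular because \<open>d < q\<close>; so the scalar is \<open>0\<close>, the diagonal of
  \<open>E\<^sub>i\<^sup>* P E\<^sub>i\<close> vanishes, and \<open>P E\<^sub>i = 0\<close>. Thus every \<open>E\<^sub>i\<close> vanishes on the summands with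
  \<open>d < q\<close>, and deleting these rows gives a cohomomorphism into the remaining summands, since
  \<open>E\<^sub>i\<^sup>* (0 \<oplus> A) E\<^sub>j\<close> only involves the remaining rows.\<close>

lemma msum_Nil [simp]: "msum n [] = 0\<^sub>m n n"
  by (simp add: msum_def)

lemma msum_Cons [simp]: "msum n (A # As) = A + msum n As"
  by (simp add: msum_def)

(* Matrix addition takes its dimensions from the right summand, so msum n As is an n x n
   matrix whatever the dimensions of the summands. *)
lemma msum_carrier: "msum n As \<in> carrier_mat n n"
  by (induction As) auto

lemma mspan_carrier: "mspan n X \<subseteq> carrier_mat n n"
  unfolding mspan_def using msum_carrier by blast

lemma zero_mem_mspan: "0\<^sub>m n n \<in> mspan n X"
  unfolding mspan_def by (intro CollectI exI[of _ "[]"]) simp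

lemma generator_mem_mspan:
  assumes "A \<in> X" and "A \<in> carrier_mat n n"
  shows "A \<in> mspan n X"
proof -
  have "A = msum n (map (\<lambda>(c, A). c \<cdot>\<^sub>m A) (zip [1] [A]))"
    using assms(2) by (auto intro!: eq_matI)
  then show ?thesis
    unfolding mspan_def using assms(1) by (intro CollectI exI[of _ "[1]"] exI[of _ "[A]"]) simp
qed

lemma mspan_induct [consumes 1, case_names zero add smult]:
  assumes "M \<in> mspan n X"
    and "P (0\<^sub>m n n)"
    and "\<And>A B. B \<in> carrier_mat n n \<Longrightarrow> P A \<Longrightarrow> P B \<Longrightarrow> P (A + B)"
    and "\<And>c A. A \<in> X \<Longrightarrow> P (c \<cdot>\<^sub>m A)"
  shows "P M"
proof -
  obtain cs As where "length cs = length As" "set As \<subseteq> X"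
    and M: "M = msum n (map (\<lambda>(c, A). c \<cdot>\<^sub>m A) (zip cs As))"
    using assms(1) unfolding mspan_def by blast
  then show ?thesis
    by (induction cs As arbitrary: M rule: list_induct2) (auto intro: assms(2-4) msum_carrier)
qed

lemma ghat_carrier: "ghat n E \<subseteq> carrier_mat n n"
  unfolding ghat_def by (rule mspan_carrier)

lemma nc_tensor_carrier: "nc_tensor n S m T \<subseteq> carrier_mat (n * m) (n * m)"
  unfolding nc_tensor_def by (rule mspan_carrier)

lemma block_index_less:
  fixes x a n q :: nat
  assumes "x < n" and "a < q"
  shows "x * q + a < n * q"
proof -
  have "x * q + a < Suc x * q" using assms(2) by simp
  also have "\<dots> \<le> n * q" using assms(1) by (intro mult_le_mono1) simp
  finally show ?thesis .
qed

lemma nc_tensor_Cd_block_scalar: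
  assumes S: "S \<subseteq> carrier_mat n n" and X: "X \<in> nc_tensor n S q (Cd q)"
    and "x < n" "y < n" "a < q" "b < q"
  shows "X $$ (x * q + a, y * q + b) = (if a = b then X $$ (x * q, y * q) else 0)"
proof -
  have idx: "x * q + a < n * q" "y * q + b < n * q" "x * q < n * q" "y * q < n * q"
    using assms(3-6) block_index_less[of x n] block_index_less[of y n] by auto
  have div_mod: "(x * q + a) div q = x" "(x * q + a) mod q = a" "(y * q + b) div q = y"
      "(y * q + b) mod q = b" "(x * q) div q = x" "(y * q) div q = y" "(x * q) mod q = 0"
      "(y * q) mod q = 0"
    using assms(5,6) by simp_all
  from X[unfolded nc_tensor_def] show ?thesis
  proof (induction rule: mspan_induct)
    case zero
    show ?case using idx by simp
  next
    case (add A B)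
    then show ?case using idx by simp
  next
    case (smult c K)
    then obtain A e where K: "K = kron A (e \<cdot>\<^sub>m 1\<^sub>m q)" and "A \<in> S"
      unfolding Cd_def by blast
    then have "A \<in> carrier_mat n n" using S by blast
    then show ?case using idx assms(5,6) unfolding K by (simp add: kron_def div_mod)
  qed
qed

lemma adj_carrier: "E \<in> carrier_mat n k \<Longrightarrow> adj E \<in> carrier_mat k n"
  by (simp add: adj_def)

lemma adj_index [simp]: "i < dim_col E \<Longrightarrow> j < dim_row E \<Longrightarrow> adj E $$ (i, j) = cnj (E $$ (j, i))"
  by (simp add: adj_def)

lemma adj_dims [simp]: "dim_row (adj E) = dim_col E" "dim_col (adj E) = dim_row E"
  by (simp_all add: adj_def)

lemma sum_cnj_mult_self_eq_0_iff:
  "finite A \<Longrightarrow> (\<Sum>t\<in>A. cnj (f t) * f t) = 0 \<longleftrightarrow> (\<forall>t\<in>A. f t = (0::complex))"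
proof -
  assume "finite A"
  have "cnj z * z = of_real ((cmod z)\<^sup>2)" for z
    by (metis complex_norm_square mult.commute)
  then have "(\<Sum>t\<in>A. cnj (f t) * f t) = of_real (\<Sum>t\<in>A. (cmod (f t))\<^sup>2)"
    by (simp only: of_real_sum)
  then have "(\<Sum>t\<in>A. cnj (f t) * f t) = 0 \<longleftrightarrow> (\<Sum>t\<in>A. (cmod (f t))\<^sup>2) = 0"
    by (simp only: of_real_eq_0_iff)
  also have "\<dots> \<longleftrightarrow> (\<forall>t\<in>A. f t = 0)"
    using \<open>finite A\<close> by (simp add: sum_nonneg_eq_0_iff)
  finally show ?thesis .
qed

lemma det_zero_row:
  assumes "A \<in> carrier_mat n n" and "k < n" and "\<And>j. j < n \<Longrightarrow> A $$ (k, j) = 0"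
  shows "det A = 0"
proof -
  have "(\<Prod>i = 0..<n. A $$ (i, p i)) = 0" if "p permutes {0..<n}" for p
    using assms(2,3) permutes_in_image[OF that, of k] by (intro prod_zero bexI[of _ k]) auto
  then show ?thesis
    using assms(1) unfolding det_def by simp
qed

lemma gram_eq_scalar_imp_zero:
  assumes "g \<in> carrier_mat q q" and "det g = 0" and "adj g * g = z \<cdot>\<^sub>m 1\<^sub>m q" and "0 < q"
  shows "z = 0"
proof -
  have "z ^ q = det (adj g * g)"
    using assms(3) by simp
  also have "\<dots> = 0"
    using det_mult[OF adj_carrier[OF assms(1)] assms(1)] assms(2) by simp
  finally show ?thesis
    using assms(4) by simp
qed

definition window_proj :: "nat \<Rightarrow> nat \<Rightarrow> nat \<Rightarrow> complex mat" where
  "window_proj N a l = mat N N (\<lambda>(i, j). if i = j \<and> a \<le> i \<and> i < a + l then 1 else 0)"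

lemma window_proj_carrier: "window_proj N a l \<in> carrier_mat N N"
  by (simp add: window_proj_def)

lemma sum_window:
  fixes a l N :: nat and h :: "nat \<Rightarrow> 'a::comm_monoid_add"
  assumes "a + l \<le> N"
  shows "(\<Sum>s = 0..<N. if a \<le> s \<and> s < a + l then h s else 0) = (\<Sum>t = 0..<l. h (a + t))"
proof -
  have "{s \<in> {0..<N}. a \<le> s \<and> s < a + l} = {a..<a + l}"
    using assms by auto
  then have "(\<Sum>s = 0..<N. if a \<le> s \<and> s < a + l then h s else 0) = sum h {a..<a + l}"
    by (metis (no_types) finite_atLeastLessThan sum.inter_filter)
  also have "\<dots> = (\<Sum>t = 0..<l. h (a + t))"
    using sum.shift_bounds_nat_ivl[of h 0 a l] by (simp add: add.commute)
  finally show ?thesis .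
qed

lemma window_proj_mult_index:
  assumes E: "E \<in> carrier_mat N k" and "s < N" and "j < k"
  shows "(window_proj N a l * E) $$ (s, j) = (if a \<le> s \<and> s < a + l then E $$ (s, j) else 0)"
proof -
  have "(window_proj N a l * E) $$ (s, j) = (\<Sum>i = 0..<N. window_proj N a l $$ (s, i) * E $$ (i, j))"
    using assms by (simp add: scalar_prod_def window_proj_def)
  also have "\<dots> = (\<Sum>i = 0..<N. if i = s then (if a \<le> s \<and> s < a + l then E $$ (s, j) else 0) else 0)"
    using assms(2) by (intro sum.cong) (auto simp: window_proj_def)
  also have "\<dots> = (if a \<le> s \<and> s < a + l then E $$ (s, j) else 0)"
    using assms(2) by simp
  finally show ?thesis .
qed

lemma sandwich_window_proj_index:
  assumes E: "E \<in> carrier_mat N k" and "a + l \<le> N" and "i < k" and "j < k"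
  shows "(adj E * window_proj N a l * E) $$ (i, j) = (\<Sum>t = 0..<l. cnj (E $$ (a + t, i)) * E $$ (a + t, j))"
proof -
  have "adj E * window_proj N a l * E = adj E * (window_proj N a l * E)"
    using adj_carrier[OF E] window_proj_carrier E by (rule assoc_mult_mat)
  then have "(adj E * window_proj N a l * E) $$ (i, j)
      = (\<Sum>s = 0..<N. adj E $$ (i, s) * (window_proj N a l * E) $$ (s, j))"
    using assms by (simp add: scalar_prod_def window_proj_def)
  also have "\<dots> = (\<Sum>s = 0..<N. if a \<le> s \<and> s < a + l then cnj (E $$ (s, i)) * E $$ (s, j) else 0)"
    using assms by (intro sum.cong) (auto simp: window_proj_mult_index)
  also have "\<dots> = (\<Sum>t = 0..<l. cnj (E $$ (a + t, i)) * E $$ (a + t, j))"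
    by (rule sum_window) fact
  finally show ?thesis .
qed

lemma sandwich_window_proj_tensor_Cd_zero:
  assumes E: "E \<in> carrier_mat N (n * q)" and S: "S \<subseteq> carrier_mat n n"
    and window: "a + l \<le> N" "l < q"
    and X: "adj E * window_proj N a l * E \<in> nc_tensor n S q (Cd q)"
    and k: "a \<le> k" "k < a + l" and c: "c < n * q"
  shows "E $$ (k, c) = 0"
proof -
  let ?X = "adj E * window_proj N a l * E"
  define x b where "x = c div q" and "b = c mod q"
  have "0 < q" using window by simp
  then have x: "x < n" and b: "b < q" and c_eq: "c = x * q + b"
    using c by (simp_all add: x_def b_def less_mult_imp_div_less)
  define z where "z = ?X $$ (x * q, x * q)"
  (* The rows of E in the window, restricted to the columns of block x and padded by zero
     rows to a square matrix: its Gram matrix is the x-th diagonal block of ?X. *)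
  define g where "g = mat q q (\<lambda>(t, b). if t < l then E $$ (a + t, x * q + b) else 0)"
  have g: "g \<in> carrier_mat q q"
    by (simp add: g_def)
  have "adj g * g = z \<cdot>\<^sub>m 1\<^sub>m q"
  proof (rule eq_matI)
    fix b b' assume "b < dim_row (z \<cdot>\<^sub>m 1\<^sub>m q)" "b' < dim_col (z \<cdot>\<^sub>m 1\<^sub>m q)"
    then have bb: "b < q" "b' < q" by simp_all
    then have idx: "x * q + b < n * q" "x * q + b' < n * q"
      using x by (simp_all add: block_index_less)
    have "(adj g * g) $$ (b, b')
        = (\<Sum>t = 0..<q. if t < l then cnj (E $$ (a + t, x * q + b)) * E $$ (a + t, x * q + b') else 0)"
      using g bb by (auto simp: scalar_prod_def g_def intro: sum.cong)
    also have "\<dots> = (\<Sum>t = 0..<l. cnj (E $$ (a + t, x * q + b)) * E $$ (a + t, x * q + b'))"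
      using sum_window[of 0 l q] window(2) by simp
    also have "\<dots> = ?X $$ (x * q + b, x * q + b')"
      using sandwich_window_proj_index[OF E window(1) idx] by simp
    also have "\<dots> = (z \<cdot>\<^sub>m 1\<^sub>m q) $$ (b, b')"
      using nc_tensor_Cd_block_scalar[OF S X x x bb] bb by (simp add: z_def)
    finally show "(adj g * g) $$ (b, b') = (z \<cdot>\<^sub>m 1\<^sub>m q) $$ (b, b')" .
  qed (use g in simp_all)
  moreover have "det g = 0"
    using window(2) by (intro det_zero_row[OF g, of "q - 1"]) (simp_all add: g_def)
  ultimately have "z = 0"
    using gram_eq_scalar_imp_zero[OF g] \<open>0 < q\<close> by blast
  then have "?X $$ (c, c) = 0"
    using nc_tensor_Cd_block_scalar[OF S X x x b b] by (simp add: c_eq z_def)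
  then have "\<forall>t\<in>{0..<l}. E $$ (a + t, c) = 0"
    using sandwich_window_proj_index[OF E window(1) c c]
      sum_cnj_mult_self_eq_0_iff[of "{0..<l}" "\<lambda>t. E $$ (a + t, c)"] by simp
  from this[rule_format, of "k - a"] show ?thesis
    using k by simp
qed

definition pad_block :: "nat \<Rightarrow> complex mat \<Rightarrow> complex mat" where
  "pad_block m B = mat (m + dim_row B) (m + dim_col B)
     (\<lambda>(i, j). if m \<le> i \<and> m \<le> j then B $$ (i - m, j - m) else 0)"

definition lower_rows :: "nat \<Rightarrow> nat \<Rightarrow> complex mat \<Rightarrow> complex mat" where
  "lower_rows m n E = mat n (dim_col E) (\<lambda>(i, j). E $$ (m + i, j))"

lemma pad_block_carrier: "B \<in> carrier_mat n n \<Longrightarrow> pad_block m B \<in> carrier_mat (m + n) (m + n)"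
  by (simp add: pad_block_def)

lemma lower_rows_carrier: "E \<in> carrier_mat N k \<Longrightarrow> lower_rows m n E \<in> carrier_mat n k"
  by (simp add: lower_rows_def)

lemma sum_add_shift_vanishing_prefix:
  fixes f :: "nat \<Rightarrow> 'a::comm_monoid_add"
  assumes "\<And>s. s < m \<Longrightarrow> f s = 0"
  shows "(\<Sum>s = 0..<m + n. f s) = (\<Sum>t = 0..<n. f (m + t))"
proof -
  have "(\<Sum>s = 0..<m + n. f s) = (\<Sum>s = 0..<m. f s) + (\<Sum>s = m..<m + n. f s)"
    by (simp add: sum.atLeastLessThan_concat)
  also have "(\<Sum>s = 0..<m. f s) = 0"
    using assms by simp
  also have "(\<Sum>s = m..<m + n. f s) = (\<Sum>t = 0..<n. f (m + t))"
    using sum.shift_bounds_nat_ivl[of f 0 m n] by (simp add: add.commute)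
  finally show ?thesis by simp
qed

lemma lower_rows_gram:
  assumes E: "E \<in> carrier_mat (m + n) k" and zero: "\<And>i c. i < m \<Longrightarrow> c < k \<Longrightarrow> E $$ (i, c) = 0"
  shows "adj (lower_rows m n E) * lower_rows m n E = adj E * E"
proof (rule eq_matI)
  fix i j assume "i < dim_row (adj E * E)" "j < dim_col (adj E * E)"
  then have ij: "i < k" "j < k" using E by simp_all
  have "(adj (lower_rows m n E) * lower_rows m n E) $$ (i, j)
      = (\<Sum>t = 0..<n. cnj (E $$ (m + t, i)) * E $$ (m + t, j))"
    using E ij by (simp add: scalar_prod_def lower_rows_def)
  also have "\<dots> = (\<Sum>s = 0..<m + n. cnj (E $$ (s, i)) * E $$ (s, j))"
    using zero ij by (intro sum_add_shift_vanishing_prefix[symmetric]) simp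
  also have "\<dots> = (adj E * E) $$ (i, j)"
    using E ij by (simp add: scalar_prod_def)
  finally show "(adj (lower_rows m n E) * lower_rows m n E) $$ (i, j) = (adj E * E) $$ (i, j)" .
qed (use E in \<open>simp_all add: lower_rows_def\<close>)

lemma pad_block_mult_index:
  assumes E: "E \<in> carrier_mat (m + n) k" and A: "A \<in> carrier_mat n n" and "s < m + n" and "j < k"
  shows "(pad_block m A * E) $$ (s, j) = (if m \<le> s then (A * lower_rows m n E) $$ (s - m, j) else 0)"
proof -
  have "(pad_block m A * E) $$ (s, j) = (\<Sum>t = 0..<m + n. pad_block m A $$ (s, t) * E $$ (t, j))"
    using assms by (simp add: scalar_prod_def pad_block_def)
  also have "\<dots> = (\<Sum>t = 0..<n. pad_block m A $$ (s, m + t) * E $$ (m + t, j))"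
    using A \<open>s < m + n\<close> by (intro sum_add_shift_vanishing_prefix) (simp add: pad_block_def)
  also have "\<dots> = (if m \<le> s then (A * lower_rows m n E) $$ (s - m, j) else 0)"
    using assms by (auto simp: pad_block_def lower_rows_def scalar_prod_def)
  finally show ?thesis .
qed

lemma lower_rows_sandwich:
  assumes Ei: "Ei \<in> carrier_mat (m + n) k" and Ej: "Ej \<in> carrier_mat (m + n) k"
    and A: "A \<in> carrier_mat n n"
  shows "adj (lower_rows m n Ei) * A * lower_rows m n Ej = adj Ei * pad_block m A * Ej"
proof -
  have Li: "lower_rows m n Ei \<in> carrier_mat n k" and Lj: "lower_rows m n Ej \<in> carrier_mat n k"
    using Ei Ej by (simp_all add: lower_rows_carrier)
  have P: "pad_block m A \<in> carrier_mat (m + n) (m + n)"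
    using A by (rule pad_block_carrier)
  have "adj (lower_rows m n Ei) * A * lower_rows m n Ej = adj (lower_rows m n Ei) * (A * lower_rows m n Ej)"
    using adj_carrier[OF Li] A Lj by (rule assoc_mult_mat)
  moreover have "adj Ei * pad_block m A * Ej = adj Ei * (pad_block m A * Ej)"
    using adj_carrier[OF Ei] P Ej by (rule assoc_mult_mat)
  moreover have "adj (lower_rows m n Ei) * (A * lower_rows m n Ej) = adj Ei * (pad_block m A * Ej)"
  proof (rule eq_matI)
    fix i j assume "i < dim_row (adj Ei * (pad_block m A * Ej))" "j < dim_col (adj Ei * (pad_block m A * Ej))"
    then have ij: "i < k" "j < k" using Ei Ej by simp_all
    have "(adj Ei * (pad_block m A * Ej)) $$ (i, j)
        = (\<Sum>s = 0..<m + n. cnj (Ei $$ (s, i)) * (pad_block m A * Ej) $$ (s, j))"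
      using Ei Ej P ij by (simp add: scalar_prod_def)
    also have "\<dots> = (\<Sum>t = 0..<n. cnj (Ei $$ (m + t, i)) * (A * lower_rows m n Ej) $$ (t, j))"
      using Ej A ij by (subst sum_add_shift_vanishing_prefix) (simp_all add: pad_block_mult_index)
    also have "\<dots> = (adj (lower_rows m n Ei) * (A * lower_rows m n Ej)) $$ (i, j)"
      using Ei Ej A ij by (simp add: scalar_prod_def lower_rows_def)
    finally show "(adj (lower_rows m n Ei) * (A * lower_rows m n Ej)) $$ (i, j)
        = (adj Ei * (pad_block m A * Ej)) $$ (i, j)" by simp
  qed (use Ei Ej Li Lj A in simp_all)
  ultimately show ?thesis by simp
qed

lemma cohom_lower_rows:
  assumes carrier: "\<forall>E\<in>set Es. E \<in> carrier_mat (m + n) k"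
    and gram: "msum k (map (\<lambda>E. adj E * E) Es) = 1\<^sub>m k"
    and sandwich: "\<forall>Ei\<in>set Es. \<forall>Ej\<in>set Es. \<forall>A\<in>S. adj Ei * A * Ej \<in> T"
    and zero: "\<forall>E\<in>set Es. \<forall>i<m. \<forall>c<k. E $$ (i, c) = 0"
    and S': "\<forall>A\<in>S'. A \<in> carrier_mat n n \<and> pad_block m A \<in> S"
  shows "cohom k T n S'"
  unfolding cohom_def
proof (intro exI[of _ "map (lower_rows m n) Es"] conjI ballI)
  show "E' \<in> carrier_mat n k" if "E' \<in> set (map (lower_rows m n) Es)" for E'
    using that carrier by (auto simp: lower_rows_carrier)
  have "map (\<lambda>E. adj E * E) (map (lower_rows m n) Es) = map (\<lambda>E. adj E * E) Es"
    using carrier zero by (auto simp: lower_rows_gram)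
  then show "msum k (map (\<lambda>E. adj E * E) (map (lower_rows m n) Es)) = 1\<^sub>m k"
    using gram by (simp del: map_map)
  show "adj Ei' * A * Ej' \<in> T"
    if Ei': "Ei' \<in> set (map (lower_rows m n) Es)" and Ej': "Ej' \<in> set (map (lower_rows m n) Es)"
      and A: "A \<in> S'"
    for Ei' Ej' A
  proof -
    obtain Ei Ej where Ei: "Ei \<in> set Es" "Ei' = lower_rows m n Ei"
      and Ej: "Ej \<in> set Es" "Ej' = lower_rows m n Ej"
      using Ei' Ej' by auto
    have "A \<in> carrier_mat n n" and "pad_block m A \<in> S"
      using A S' by auto
    then have "adj Ei * pad_block m A * Ej \<in> T"
      using sandwich Ei Ej by blast
    moreover have "adj Ei' * A * Ej' = adj Ei * pad_block m A * Ej"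
      unfolding Ei(2) Ej(2) using carrier Ei(1) Ej(1) \<open>A \<in> carrier_mat n n\<close>
      by (intro lower_rows_sandwich) auto
    ultimately show ?thesis by simp
  qed
qed

definition short_window_at :: "nat \<Rightarrow> nat \<Rightarrow> complex mat set \<Rightarrow> nat \<Rightarrow> bool" where
  "short_window_at q N S i \<longleftrightarrow>
     (\<exists>a l. a \<le> i \<and> i < a + l \<and> a + l \<le> N \<and> l < q \<and> window_proj N a l \<in> S)"

lemma cohom_tensor_Cd_drop_short_windows:
  assumes "cohom (n * q) (nc_tensor n R q (Cd q)) (m + m') S"
    and R: "R \<subseteq> carrier_mat n n"
    and short: "\<forall>i<m. short_window_at q (m + m') S i"
    and S': "\<forall>A\<in>S'. A \<in> carrier_mat m' m' \<and> pad_block m A \<in> S"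
  shows "cohom (n * q) (nc_tensor n R q (Cd q)) m' S'"
proof -
  obtain Es where carrier: "\<forall>E\<in>set Es. E \<in> carrier_mat (m + m') (n * q)"
    and gram: "msum (n * q) (map (\<lambda>E. adj E * E) Es) = 1\<^sub>m (n * q)"
    and sandwich: "\<forall>Ei\<in>set Es. \<forall>Ej\<in>set Es. \<forall>A\<in>S. adj Ei * A * Ej \<in> nc_tensor n R q (Cd q)"
    using assms(1) unfolding cohom_def by blast
  have "\<forall>E\<in>set Es. \<forall>i<m. \<forall>c<n * q. E $$ (i, c) = 0"
  proof (intro ballI allI impI)
    fix E i c assume E: "E \<in> set Es" and "i < m" and c: "c < n * q"
    then obtain a l where "a \<le> i" "i < a + l" "a + l \<le> m + m'" "l < q"
      and "window_proj (m + m') a l \<in> S"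
      using short unfolding short_window_at_def by blast
    then show "E $$ (i, c) = 0"
      using sandwich E carrier R c by (intro sandwich_window_proj_tensor_Cd_zero) auto
  qed
  with carrier gram sandwich S' show ?thesis
    by (intro cohom_lower_rows)
qed

lemma nc_dsum_fst_append: "fst (nc_dsum (L1 @ L2)) = fst (nc_dsum L1) + fst (nc_dsum L2)"
  by (induction L1 rule: nc_dsum.induct) simp_all

lemma nc_dsum_carrier:
  "\<forall>p\<in>set L. snd p \<subseteq> carrier_mat (fst p) (fst p) \<Longrightarrow>
     snd (nc_dsum L) \<subseteq> carrier_mat (fst (nc_dsum L)) (fst (nc_dsum L))"
  by (induction L rule: nc_dsum.induct) (auto intro!: four_block_carrier_mat)

lemma four_block_mem_nc_dsum_Cons:
  "A \<in> S \<Longrightarrow> B \<in> snd (nc_dsum L) \<Longrightarrow>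
     four_block_mat A (0\<^sub>m n (fst (nc_dsum L))) (0\<^sub>m (fst (nc_dsum L)) n) B \<in> snd (nc_dsum ((n, S) # L))"
  by auto

lemma zero_mem_nc_dsum:
  "\<forall>p\<in>set L. 0\<^sub>m (fst p) (fst p) \<in> snd p \<Longrightarrow> 0\<^sub>m (fst (nc_dsum L)) (fst (nc_dsum L)) \<in> snd (nc_dsum L)"
proof (induction L rule: nc_dsum.induct)
  case (2 n S L)
  then have "four_block_mat (0\<^sub>m n n) (0\<^sub>m n (fst (nc_dsum L))) (0\<^sub>m (fst (nc_dsum L)) n)
      (0\<^sub>m (fst (nc_dsum L)) (fst (nc_dsum L))) \<in> snd (nc_dsum ((n, S) # L))"
    by (intro four_block_mem_nc_dsum_Cons) auto
  then show ?case by simp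
qed simp

lemma pad_block_0 [simp]: "pad_block 0 B = B"
  by (rule eq_matI) (simp_all add: pad_block_def)

lemma pad_block_add:
  assumes "B \<in> carrier_mat k k"
  shows "pad_block (n + m) B = four_block_mat (0\<^sub>m n n) (0\<^sub>m n (m + k)) (0\<^sub>m (m + k) n) (pad_block m B)"
  using assms by (intro eq_matI) (auto simp: pad_block_def)

lemma pad_block_mem_nc_dsum_append:
  assumes "\<forall>p\<in>set L1. 0\<^sub>m (fst p) (fst p) \<in> snd p"
    and "\<forall>p\<in>set L2. snd p \<subseteq> carrier_mat (fst p) (fst p)" and B: "B \<in> snd (nc_dsum L2)"
  shows "pad_block (fst (nc_dsum L1)) B \<in> snd (nc_dsum (L1 @ L2))"
proof -
  have B_carrier: "B \<in> carrier_mat (fst (nc_dsum L2)) (fst (nc_dsum L2))"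
    using nc_dsum_carrier[OF assms(2)] B by blast
  from assms(1) show ?thesis
  proof (induction L1 rule: nc_dsum.induct)
    case 1
    then show ?case using B by simp
  next
    case (2 n S L)
    then have "four_block_mat (0\<^sub>m n n) (0\<^sub>m n (fst (nc_dsum (L @ L2)))) (0\<^sub>m (fst (nc_dsum (L @ L2))) n)
        (pad_block (fst (nc_dsum L)) B) \<in> snd (nc_dsum ((n, S) # L @ L2))"
      by (intro four_block_mem_nc_dsum_Cons) auto
    then show ?case
      using pad_block_add[OF B_carrier, of n "fst (nc_dsum L)"] by (simp add: nc_dsum_fst_append)
  qed
qed

lemma window_proj_four_block_upper:
  "a + l \<le> n \<Longrightarrow> window_proj (n + N) a l = four_block_mat (window_proj n a l) (0\<^sub>m n N) (0\<^sub>m N n) (0\<^sub>m N N)"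
  by (intro eq_matI) (auto simp: window_proj_def)

lemma window_proj_four_block_lower:
  "window_proj (n + N) (n + a) l = four_block_mat (0\<^sub>m n n) (0\<^sub>m n N) (0\<^sub>m N n) (window_proj N a l)"
  by (intro eq_matI) (auto simp: window_proj_def)

lemma short_window_at_nc_dsum_Cons_head:
  assumes "short_window_at q n S i" and "0\<^sub>m (fst (nc_dsum L)) (fst (nc_dsum L)) \<in> snd (nc_dsum L)"
  shows "short_window_at q (fst (nc_dsum ((n, S) # L))) (snd (nc_dsum ((n, S) # L))) i"
proof -
  obtain a l where "a \<le> i" "i < a + l" "a + l \<le> n" "l < q" and W: "window_proj n a l \<in> S"
    using assms(1) unfolding short_window_at_def by blast
  moreover have "window_proj (n + fst (nc_dsum L)) a l \<in> snd (nc_dsum ((n, S) # L))"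
    unfolding window_proj_four_block_upper[OF \<open>a + l \<le> n\<close>]
    using W assms(2) by (rule four_block_mem_nc_dsum_Cons)
  ultimately show ?thesis
    unfolding short_window_at_def by (intro exI[of _ a] exI[of _ l]) simp
qed

lemma short_window_at_nc_dsum_Cons_tail:
  assumes "short_window_at q (fst (nc_dsum L)) (snd (nc_dsum L)) i" and "0\<^sub>m n n \<in> S"
  shows "short_window_at q (fst (nc_dsum ((n, S) # L))) (snd (nc_dsum ((n, S) # L))) (n + i)"
proof -
  obtain a l where "a \<le> i" "i < a + l" "a + l \<le> fst (nc_dsum L)" "l < q"
    and W: "window_proj (fst (nc_dsum L)) a l \<in> snd (nc_dsum L)"
    using assms(1) unfolding short_window_at_def by blast
  moreover have "window_proj (n + fst (nc_dsum L)) (n + a) l \<in> snd (nc_dsum ((n, S) # L))"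
    unfolding window_proj_four_block_lower
    using assms(2) W by (rule four_block_mem_nc_dsum_Cons)
  ultimately show ?thesis
    unfolding short_window_at_def by (intro exI[of _ "n + a"] exI[of _ l]) simp
qed

lemma short_window_at_nc_dsum_append:
  assumes "\<forall>p\<in>set (L1 @ L2). 0\<^sub>m (fst p) (fst p) \<in> snd p"
    and "\<forall>p\<in>set L1. \<forall>i<fst p. short_window_at q (fst p) (snd p) i"
    and "i < fst (nc_dsum L1)"
  shows "short_window_at q (fst (nc_dsum (L1 @ L2))) (snd (nc_dsum (L1 @ L2))) i"
  using assms
proof (induction L1 arbitrary: i rule: nc_dsum.induct)
  case (2 n S L)
  have zero: "0\<^sub>m (fst (nc_dsum (L @ L2))) (fst (nc_dsum (L @ L2))) \<in> snd (nc_dsum (L @ L2))"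
    using "2.prems"(1) by (intro zero_mem_nc_dsum) simp
  show ?case
  proof (cases "i < n")
    case True
    then show ?thesis
      using "2.prems"(2) zero short_window_at_nc_dsum_Cons_head[of q n S i "L @ L2"] by simp
  next
    case False
    then have "short_window_at q (fst (nc_dsum (L @ L2))) (snd (nc_dsum (L @ L2))) (i - n)"
      using "2.prems" by (intro "2.IH") auto
    then show ?thesis
      using False "2.prems"(1) short_window_at_nc_dsum_Cons_tail[of q "L @ L2" "i - n" n S] by simp
  qed
qed simp

lemma div_eq_iff_bounds:
  fixes i d v :: nat
  assumes "0 < d"
  shows "i div d = v \<longleftrightarrow> v * d \<le> i \<and> i < v * d + d"
proof
  assume "i div d = v"
  then show "v * d \<le> i \<and> i < v * d + d"
    using div_mult_mod_eq[of i d] mod_less_divisor[OF assms, of i] by auto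
next
  assume "v * d \<le> i \<and> i < v * d + d"
  then show "i div d = v"
    by (intro div_nat_eqI) (simp_all add: mult.commute)
qed

lemma kron_munit_one_eq_window_proj:
  assumes "v < m"
  shows "kron (munit m v v) (1\<^sub>m d) = window_proj (m * d) (v * d) d"
proof (rule eq_matI)
  fix i j assume "i < dim_row (window_proj (m * d) (v * d) d)" "j < dim_col (window_proj (m * d) (v * d) d)"
  then have ij: "i < m * d" "j < m * d" by (simp_all add: window_proj_def)
  then have "0 < d" by (cases d) simp_all
  have kron: "kron (munit m v v) (1\<^sub>m d) $$ (i, j)
      = (if i div d = v \<and> j div d = v \<and> i mod d = j mod d then 1 else 0)"
    using ij \<open>0 < d\<close> by (simp add: kron_def munit_def less_mult_imp_div_less)
  have window: "window_proj (m * d) (v * d) d $$ (i, j) = (if i = j \<and> v * d \<le> i \<and> i < v * d + d then 1 else 0)"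
    using ij by (simp add: window_proj_def)
  have "(i div d = v \<and> j div d = v \<and> i mod d = j mod d) \<longleftrightarrow> (i = j \<and> i div d = v)"
    using div_mult_mod_eq[of i d] div_mult_mod_eq[of j d] by metis
  then show "kron (munit m v v) (1\<^sub>m d) $$ (i, j) = window_proj (m * d) (v * d) d $$ (i, j)"
    unfolding kron window div_eq_iff_bounds[OF \<open>0 < d\<close>, of i v] by simp
qed (simp_all add: kron_def munit_def window_proj_def)

lemma short_window_at_summand:
  assumes "0 < d" and "d < q" and "i < fst (summand Gn GE d)"
  shows "short_window_at q (fst (summand Gn GE d)) (snd (summand Gn GE d)) i"
proof -
  define v where "v = i div d"
  have i: "i < Gn d * d"
    using assms(3) by (simp add: summand_def)
  then have v: "v < Gn d"
    by (simp add: v_def less_mult_imp_div_less)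
  have "munit (Gn d) v v \<in> ghat (Gn d) (GE d)"
    unfolding ghat_def using v by (intro generator_mem_mspan) (auto simp: munit_def)
  moreover have "1\<^sub>m d \<in> Cd d"
    unfolding Cd_def by (auto intro!: exI[of _ 1] eq_matI)
  ultimately have "kron (munit (Gn d) v v) (1\<^sub>m d) \<in> {kron A B | A B. A \<in> ghat (Gn d) (GE d) \<and> B \<in> Cd d}"
    by blast
  then have "kron (munit (Gn d) v v) (1\<^sub>m d) \<in> nc_tensor (Gn d) (ghat (Gn d) (GE d)) d (Cd d)"
    unfolding nc_tensor_def by (rule generator_mem_mspan) (simp add: kron_def munit_def)
  then have "window_proj (Gn d * d) (v * d) d \<in> snd (summand Gn GE d)"
    by (simp add: summand_def kron_munit_one_eq_window_proj[OF v])
  moreover have "v * d \<le> i" "i < v * d + d"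
    using div_eq_iff_bounds[OF assms(1), of i v] by (simp_all add: v_def)
  moreover have "v * d + d \<le> Gn d * d"
    using mult_le_mono1[of "Suc v" "Gn d" d] v by simp
  ultimately show ?thesis
    unfolding short_window_at_def using assms(2) by (intro exI[of _ "v * d"] exI[of _ d]) (simp add: summand_def)
qed

lemma short_window_at_summands_below:
  "\<forall>p\<in>set (map (summand Gn GE) [1..<q]). \<forall>i<fst p. short_window_at q (fst p) (snd p) i"
  by (simp add: short_window_at_summand)

lemma zero_mem_summand: "0\<^sub>m (fst (summand Gn GE d)) (fst (summand Gn GE d)) \<in> snd (summand Gn GE d)"
  by (simp add: summand_def nc_tensor_def zero_mem_mspan)

lemma summand_carrier: "snd (summand Gn GE d) \<subseteq> carrier_mat (fst (summand Gn GE d)) (fst (summand Gn GE d))"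
  by (simp add: summand_def nc_tensor_carrier)

theorem lemma3p2:
  fixes hn :: nat and HE :: "nat \<Rightarrow> nat \<Rightarrow> bool"
    and Gn :: "nat \<Rightarrow> nat" and GE :: "nat \<Rightarrow> nat \<Rightarrow> nat \<Rightarrow> bool"
    and r q :: nat
  assumes "simple_graph hn HE"
    and "\<And>d. 1 \<le> d \<Longrightarrow> d \<le> r \<Longrightarrow> simple_graph (Gn d) (GE d)"
    and "1 \<le> q" and "q \<le> r"
    and "cohom (hn * q) (nc_tensor hn (ghat hn HE) q (Cd q))
           (fst (nc_dsum (map (summand Gn GE) [1..<r+1])))
           (snd (nc_dsum (map (summand Gn GE) [1..<r+1])))"
  shows "cohom (hn * q) (nc_tensor hn (ghat hn HE) q (Cd q))
           (fst (nc_dsum (map (summand Gn GE) [q..<r+1])))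
           (snd (nc_dsum (map (summand Gn GE) [q..<r+1])))"
proof -
  define L1 where "L1 = map (summand Gn GE) [1..<q]"
  define L2 where "L2 = map (summand Gn GE) [q..<r+1]"
  have split: "map (summand Gn GE) [1..<r+1] = L1 @ L2"
    using assms(3,4) upt_add_eq_append[of 1 q "r + 1 - q"] by (simp add: L1_def L2_def)
  have zero: "\<forall>p\<in>set (L1 @ L2). 0\<^sub>m (fst p) (fst p) \<in> snd p"
    by (auto simp: L1_def L2_def zero_mem_summand)
  have short: "\<forall>i<fst (nc_dsum L1). short_window_at q (fst (nc_dsum (L1 @ L2))) (snd (nc_dsum (L1 @ L2))) i"
    using zero short_window_at_summands_below unfolding L1_def
    by (blast intro: short_window_at_nc_dsum_append)
  have carrier: "\<forall>p\<in>set L2. snd p \<subseteq> carrier_mat (fst p) (fst p)"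
    by (auto simp: L2_def summand_carrier)
  have pad: "\<forall>A\<in>snd (nc_dsum L2). A \<in> carrier_mat (fst (nc_dsum L2)) (fst (nc_dsum L2))
      \<and> pad_block (fst (nc_dsum L1)) A \<in> snd (nc_dsum (L1 @ L2))"
    using zero nc_dsum_carrier[OF carrier] pad_block_mem_nc_dsum_append[OF _ carrier] by auto
  have "cohom (hn * q) (nc_tensor hn (ghat hn HE) q (Cd q))
      (fst (nc_dsum L1) + fst (nc_dsum L2)) (snd (nc_dsum (L1 @ L2)))"
    using assms(5) unfolding split nc_dsum_fst_append .
  from cohom_tensor_Cd_drop_short_windows[OF this ghat_carrier short[unfolded nc_dsum_fst_append] pad]
  show ?thesis
    unfolding L2_def .
qed

end
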